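(* Let $\mathcal{M}$ be a mesh of $\Omega$, $N\ge 2$, $\delta t=T/N$, and consider any solution of the scheme described in the context. For every dual face $\epsilon$ write $|\mathbf{u}^n_\epsilon|^2=\sum_{i=1}^d(u^n_{\epsilon,i})^2$, and define, for $K\in\mathcal{M}$, $\sigma\in\mathcal{E}(K)$ and $0\le n\le N$, $|K|\,(\rho E_k)^n_K=\frac14\sum_{\sigma\in\mathcal{E}(K)}|D_\sigma|\,\rho^n_{D_\sigma}\,|\mathbf{u}^n_\sigma|^2$, and, for $0\le n\le N-1$, $(G_k)^n_{K,\sigma}=-\frac14\sum_{\epsilon\in\mathcal{E}(D_\sigma),\,\epsilon\subset K}F^n_{\sigma,\epsilon}|\mathbf{u}^n_\epsilon|^2+\frac14\sum_{\epsilon\in\mathcal{E}(D_\sigma),\,\epsilon\not\subset K}F^n_{\sigma,\epsilon}|\mathbf{u}^n_\epsilon|^2$. Then for every $0\le n\le N-2$ and every $K\in\mathcal{M}$, $\frac{|K|}{\delta t}\Big[\big(\rho^{n+2}_Ke^{n+2}_K+(\rho E_k)^{n+1}_K\big)-\big(\rho^{n+1}_Ke^{n+1}_K+(\rho E_k)^n_K\big)\Big]+\sum_{\sigma\in\mathcal{E}(K)}\big(F^{n+1}_{K,\sigma}e^{n+1}_\sigma+(G_k)^n_{K,\sigma}\big)+\sum_{\sigma\in\mathcal{E}(K)\cap\mathcal{E}_{\rm int},\,\sigma=K|L}|\sigma|\,\frac{p^{n+1}_K+p^{n+1}_L}{2}\,\mathbf{u}^{n+1}_\sigma\cdot\ma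thbf{n}_{K,\sigma}=0$.
   Context: Let $\Omega\subset\mathbb{R}^d$ ($1\le d\le 3$) be an open bounded connected polyhedral set and $T>0$. A mesh $\mathcal{M}$ of $\Omega$ is a finite family of compact connected cells with pairwise disjoint interiors whose union is $\overline{\Omega}$; cells are intervals ($d=1$), quadrangles ($d=2$) or hexahedra ($d=3$), and the mesh is conforming. $\mathcal{E}(K)$ is the set of faces of $K$, with $\zeta$ elements ($\zeta=2,4,6$ for $d=1,2,3$); $\mathcal{E}$ is the set of faces, $\mathcal{E}_{\rm int}$ the faces shared by two distinct cells (written $\sigma=K|L$), $\mathcal{E}_{\rm ext}=\mathcal{E}\setminus\mathcal{E}_{\rm int}$; $\mathbf{n}_{K,\sigma}$ unit normal to $\sigma$ outward $K$, $(\mathbf{n}_{K,\sigma})_i$ its $i$-th component; $|A|$ Lebesgue measure. Dual mesh: each $K$ is partitioned into half-diamond cells $D_{K,\sigma}$, $\sigma\in\mathcal{E}(K)$, with $|D_{K,\sigma}|=|K|/\zeta$; $D_\sigma=D_{K,\sigma}\cup D_{L,\sigma}$ if $\sigma=K|L$, $D_\sigma=D_{K,\sigma}$ if $\sigma\in\mathcal{E}_{\rm ext}\cap\mathcal{E}(K)$. A dual face $\epsilon=\sigma|\sigma'$ is the common boundary of two half-diamond cells $D_{K,\sigma},D_{K,\sigma'}$ of a same cell $K$ (connectivity of the reference square/cube), written $\epsilon\subset K$; $\mathcal{E}(D_\sigma)$ is the set of dual faces of $D_\sigma$. Time: $t_n=n\delta t$. The scheme: let $\gamma>1$, $\rho_0,e_0\in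 L^\infty(\Omega)$ with $\rho_0>0$, $e_0>0$, and $\mathbf{u}_0\in L^\infty(\Omega)^d$. A solution is a family of reals $\rho^n_K,e^n_K,p^n_K$ ($K\in\mathcal{M}$) and vectors $\mathbf{u}^n_\sigma=(u^n_{\sigma,1},\dots,u^n_{\sigma,d})$ ($\sigma\in\mathcal{E}$), $0\le n\le N$, such that: (i) $\rho^0_K=\frac{1}{|K|}\int_K\rho_0$, $e^0_K=\frac1{|K|}\int_Ke_0$, $\mathbf{u}^0_\sigma=\frac{1}{|D_\sigma|}\int_{D_\sigma}\mathbf{u}_0$, and $p^n_K=(\gamma-1)\rho^n_Ke^n_K$ for all $n$. (ii) Fluxes: for $\sigma=K|L$, $F^n_{K,\sigma}=|\sigma|\rho^n_\sigma\mathbf{u}^n_\sigma\cdot\mathbf{n}_{K,\sigma}$ with $\rho^n_\sigma$ a convex combination of $\rho^n_K,\rho^n_L$; $F^n_{K,\sigma}=0$ if $\sigma\in\mathcal{E}_{\rm ext}$. Dual densities: $\rho^n_{D_\sigma}=(|D_{K,\sigma}|\rho^n_K+|D_{L,\sigma}|\rho^n_L)/|D_\sigma|$ if $\sigma=K|L$, $\rho^n_{D_\sigma}=\rho^n_K$ if $\sigma\in\mathcal{E}_{\rm ext}\cap\mathcal{E}(K)$. Dual fluxes $F^n_{\sigma,\epsilon}$ ($\epsilon\in\mathcal{E}(D_\sigma)$) satisfy: (a) $F^n_{\sigma,\epsilon}=-F^n_{\sigma',\epsilon}$ for $\epsilon=\sigma|\sigma'$; (b) for every $K$ and $\sigma\in\mathcal{E}(K)$,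 $F^n_{K,\sigma}+\sum_{\epsilon\in\mathcal{E}(D_\sigma),\epsilon\subset K}F^n_{\sigma,\epsilon}=\frac1\zeta\sum_{\sigma'\in\mathcal{E}(K)}F^n_{K,\sigma'}$; (c) for $\epsilon\in\mathcal{E}(D_\sigma)$, $\epsilon\subset K$, $F^n_{\sigma,\epsilon}=\sum_{\sigma'\in\mathcal{E}(K)}\xi_{\epsilon,\sigma'}F^n_{K,\sigma'}$ with real coefficients depending only on the relative positions of $\epsilon,\sigma'$ in the cell (fixed, independent of $K$ and the mesh). (iii) For $0\le n\le N-1$ and $K\in\mathcal{M}$: $\frac{|K|}{\delta t}(\rho^{n+1}_K-\rho^n_K)+\sum_{\sigma\in\mathcal{E}(K)}F^n_{K,\sigma}=0$ and $\frac{|K|}{\delta t}(\rho^{n+1}_Ke^{n+1}_K-\rho^n_Ke^n_K)+\sum_{\sigma\in\mathcal{E}(K)}F^n_{K,\sigma}e^n_\sigma+|K|p^n_K(\operatorname{div}\mathbf{u})^n_K=S^n_K$, where $e^n_\sigma$ is a convex combination of $e^n_K,e^n_L$ for $\sigma=K|L$ and $(\operatorname{div}\mathbf{u})^n_K=\frac1{|K|}\sum_{\sigma\in\mathcal{E}(K)}|\sigma|\mathbf{u}^n_\sigma\cdot\mathbf{n}_{K,\sigma}$. (iv) For $0\le n\le N-1$, $1\le i\le d$ and $\sigma=K|L\in\mathcal{E}_{\rm int}$: $\frac{|D_\sigma|}{\delta t}(\rho^{n+1}_{D_\sigma}u^{n+1}_{\sigma,i}-\rho^n_{D_\sigma}u^n_{\sigma,i})+\sum_{\epsilon\in\mathcal{E}(D_\sigma)}F^n_{\sigma,\epsilon}u^n_{\epsilon,i}+|\sigma|(p^{n+1}_L-p^{n+1}_K)(\mathbf{n}_{K,\sigma})_i=0$,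 where for each dual face $\epsilon=\sigma|\sigma'$, $u^n_{\epsilon,i}$ is a single real which is a convex combination of $u^n_{\sigma,i}$ and $u^n_{\sigma',i}$; for $\sigma\in\mathcal{E}_{\rm ext}\cap\mathcal{E}(K)$, $\mathbf{u}^n_\sigma\cdot\mathbf{n}_{K,\sigma}=0$ for all $n$ and the same equation holds with the pressure term replaced by $g^{n+1}_\sigma(\mathbf{n}_{K,\sigma})_i$ for some real $g^{n+1}_\sigma$. (v) $S^0_K=0$ and, for $0\le n\le N-1$, $S^{n+1}_K=\frac12\sum_{i=1}^d\sum_{\sigma\in\mathcal{E}(K)}R^{n+1}_{\sigma,i}$ with $R^{n+1}_{\sigma,i}=\frac12\frac{|D_\sigma|}{\delta t}\rho^{n+1}_{D_\sigma}(u^{n+1}_{\sigma,i}-u^n_{\sigma,i})^2-\frac12\sum_{\epsilon\in\mathcal{E}(D_\sigma)}F^n_{\sigma,\epsilon}(u^n_{\epsilon,i}-u^n_{\sigma,i})^2+(u^{n+1}_{\sigma,i}-u^n_{\sigma,i})\sum_{\epsilon\in\mathcal{E}(D_\sigma)}F^n_{\sigma,\epsilon}(u^n_{\epsilon,i}-u^n_{\sigma,i})$. *)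

theory Defs
  imports "HOL-Analysis.Analysis"
begin

text \<open>A reference square/cube has faces labelled by (direction, side) :: 'd \<times> bool;
  each cell carries a bijection from its faces onto these reference faces, which
  encodes the connectivity of the reference cell.\<close>

record ('c, 'f, 'd::finite) mesh =
  cells :: "'c set"
  faces_of :: "'c \<Rightarrow> 'f set"
  cell_set :: "'c \<Rightarrow> (real^'d) set"
  half_diamond :: "'c \<Rightarrow> 'f \<Rightarrow> (real^'d) set"
  face_meas :: "'f \<Rightarrow> real"
  normal :: "'c \<Rightarrow> 'f \<Rightarrow> real^'d"
  label :: "'c \<Rightarrow> 'f \<Rightarrow> 'd \<times> bool"

definition zeta :: "('c, 'f, 'd::finite) mesh \<Rightarrow> nat" where
  "zeta M = 2 * CARD('d)"

definition cmeas :: "('c, 'f, 'd::finite) mesh \<Rightarrow> 'c \<Rightarrow> real" where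
  "cmeas M K = measure lebesgue (cell_set M K)"

definition faces :: "('c, 'f, 'd::finite) mesh \<Rightarrow> 'f set" where
  "faces M = (\<Union>K\<in>cells M. faces_of M K)"

definition cells_of :: "('c, 'f, 'd::finite) mesh \<Rightarrow> 'f \<Rightarrow> 'c set" where
  "cells_of M \<sigma> = {K \<in> cells M. \<sigma> \<in> faces_of M K}"

definition interior_faces :: "('c, 'f, 'd::finite) mesh \<Rightarrow> 'f set" where
  "interior_faces M = {\<sigma> \<in> faces M. \<exists>K\<in>cells M. \<exists>L\<in>cells M.
      K \<noteq> L \<and> \<sigma> \<in> faces_of M K \<and> \<sigma> \<in> faces_of M L}"

definition exterior_faces :: "('c, 'f, 'd::finite) mesh \<Rightarrow> 'f set" where
  "exterior_faces M = faces M - interior_faces M"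

definition neighbor :: "('c, 'f, 'd::finite) mesh \<Rightarrow> 'c \<Rightarrow> 'f \<Rightarrow> 'c" where
  "neighbor M K \<sigma> = (THE L. L \<in> cells M \<and> L \<noteq> K \<and> \<sigma> \<in> faces_of M L)"

definition hd_meas :: "('c, 'f, 'd::finite) mesh \<Rightarrow> 'c \<Rightarrow> 'f \<Rightarrow> real" where
  "hd_meas M K \<sigma> = cmeas M K / real (zeta M)"

definition dual_meas :: "('c, 'f, 'd::finite) mesh \<Rightarrow> 'f \<Rightarrow> real" where
  "dual_meas M \<sigma> = (\<Sum>K\<in>cells_of M \<sigma>. hd_meas M K \<sigma>)"

definition dual_set :: "('c, 'f, 'd::finite) mesh \<Rightarrow> 'f \<Rightarrow> (real^'d) set" where
  "dual_set M \<sigma> = (\<Union>K\<in>cells_of M \<sigma>. half_diamond M K \<sigma>)"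

text \<open>Dual face \<epsilon> = \<sigma>|\<sigma>' inside K: the half-diamond cells D_{K,\<sigma>} and D_{K,\<sigma>'} share a
  face, i.e. \<sigma>, \<sigma>' are distinct faces of K which are not opposite in the reference
  square/cube (for d = 1 the two halves of the interval share the midpoint).\<close>
definition adj :: "('c, 'f, 'd::finite) mesh \<Rightarrow> 'c \<Rightarrow> 'f \<Rightarrow> 'f \<Rightarrow> bool" where
  "adj M K \<sigma> \<sigma>' \<longleftrightarrow> K \<in> cells M \<and> \<sigma> \<in> faces_of M K \<and> \<sigma>' \<in> faces_of M K \<and> \<sigma> \<noteq> \<sigma>' \<and>
     (CARD('d) = 1 \<or> fst (label M K \<sigma>) \<noteq> fst (label M K \<sigma>'))"

text \<open>E(D_\<sigma>): the dual face \<epsilon> = \<sigma>|\<sigma>' \<subset> K is represented by the pair (K, \<sigma>').\<close>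
definition dual_faces :: "('c, 'f, 'd::finite) mesh \<Rightarrow> 'f \<Rightarrow> ('c \<times> 'f) set" where
  "dual_faces M \<sigma> = {(K, \<sigma>'). K \<in> cells_of M \<sigma> \<and> adj M K \<sigma> \<sigma>'}"

definition omega :: "('c, 'f, 'd::finite) mesh \<Rightarrow> (real^'d) set" where
  "omega M = interior (\<Union>K\<in>cells M. cell_set M K)"

definition is_mesh :: "('c, 'f, 'd::finite) mesh \<Rightarrow> bool" where
  "is_mesh M \<longleftrightarrow>
     CARD('d) \<le> 3 \<and>
     finite (cells M) \<and> cells M \<noteq> {} \<and>
     connected (omega M) \<and>
     closure (omega M) = (\<Union>K\<in>cells M. cell_set M K) \<and>
     (\<forall>K\<in>cells M. compact (cell_set M K) \<and> connected (cell_set M K) \<and> cmeas M K > 0) \<and>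
     (\<forall>K\<in>cells M. \<forall>L\<in>cells M. K \<noteq> L \<longrightarrow>
        interior (cell_set M K) \<inter> interior (cell_set M L) = {}) \<and>
     (\<forall>K\<in>cells M. bij_betw (label M K) (faces_of M K) UNIV) \<and>
     (\<forall>\<sigma>\<in>faces M. face_meas M \<sigma> > 0 \<and> card (cells_of M \<sigma>) \<le> 2) \<and>
     (\<forall>K\<in>cells M. \<forall>\<sigma>\<in>faces_of M K. norm (normal M K \<sigma>) = 1) \<and>
     (\<forall>K\<in>cells M. \<forall>L\<in>cells M. \<forall>\<sigma>. K \<noteq> L \<and> \<sigma> \<in> faces_of M K \<and> \<sigma> \<in> faces_of M L \<longrightarrow>
        normal M L \<sigma> = - normal M K \<sigma>) \<and>
     (\<forall>K\<in>cells M.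
        (\<Union>\<sigma>\<in>faces_of M K. half_diamond M K \<sigma>) = cell_set M K \<and>
        (\<forall>\<sigma>\<in>faces_of M K. half_diamond M K \<sigma> \<in> sets lebesgue \<and>
            measure lebesgue (half_diamond M K \<sigma>) = cmeas M K / real (zeta M)) \<and>
        (\<forall>\<sigma>\<in>faces_of M K. \<forall>\<sigma>'\<in>faces_of M K. \<sigma> \<noteq> \<sigma>' \<longrightarrow>
            interior (half_diamond M K \<sigma>) \<inter> interior (half_diamond M K \<sigma>') = {}))"

record ('c, 'f, 'd::finite) solution =
  rho :: "nat \<Rightarrow> 'c \<Rightarrow> real"
  ener :: "nat \<Rightarrow> 'c \<Rightarrow> real"
  pres :: "nat \<Rightarrow> 'c \<Rightarrow> real"
  vel :: "nat \<Rightarrow> 'f \<Rightarrow> real^'d"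
  rho_face :: "nat \<Rightarrow> 'f \<Rightarrow> real"
  ener_face :: "nat \<Rightarrow> 'f \<Rightarrow> real"
  dual_flux :: "nat \<Rightarrow> 'f \<Rightarrow> 'c \<Rightarrow> 'f \<Rightarrow> real"   \<comment> \<open>F^n_{\<sigma>,\<epsilon>}, \<epsilon> = \<sigma>|\<sigma>' \<subset> K, as dual_flux n \<sigma> K \<sigma>'\<close>
  vel_dual :: "nat \<Rightarrow> 'c \<Rightarrow> 'f \<Rightarrow> 'f \<Rightarrow> real^'d"  \<comment> \<open>u^n_\<epsilon>, \<epsilon> = \<sigma>|\<sigma>' \<subset> K, as vel_dual n K \<sigma> \<sigma>'\<close>
  bnd_pres :: "nat \<Rightarrow> 'f \<Rightarrow> real"

definition convex_comb :: "real \<Rightarrow> real \<Rightarrow> real \<Rightarrow> bool" where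
  "convex_comb x a b \<longleftrightarrow> (\<exists>t. 0 \<le> t \<and> t \<le> 1 \<and> x = t * a + (1 - t) * b)"

definition sqn :: "real^'d \<Rightarrow> real" where
  "sqn v = (\<Sum>i\<in>UNIV. (v $ i)^2)"

definition flux :: "('c, 'f, 'd::finite) mesh \<Rightarrow> ('c, 'f, 'd) solution \<Rightarrow> nat \<Rightarrow> 'c \<Rightarrow> 'f \<Rightarrow> real" where
  "flux M S n K \<sigma> = (if \<sigma> \<in> interior_faces M
      then face_meas M \<sigma> * rho_face S n \<sigma> * (vel S n \<sigma> \<bullet> normal M K \<sigma>) else 0)"

definition rho_dual :: "('c, 'f, 'd::finite) mesh \<Rightarrow> ('c, 'f, 'd) solution \<Rightarrow> nat \<Rightarrow> 'f \<Rightarrow> real" where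
  "rho_dual M S n \<sigma> = (\<Sum>K\<in>cells_of M \<sigma>. hd_meas M K \<sigma> * rho S n K) / dual_meas M \<sigma>"

definition div_u :: "('c, 'f, 'd::finite) mesh \<Rightarrow> ('c, 'f, 'd) solution \<Rightarrow> nat \<Rightarrow> 'c \<Rightarrow> real" where
  "div_u M S n K = (\<Sum>\<sigma>\<in>faces_of M K. face_meas M \<sigma> * (vel S n \<sigma> \<bullet> normal M K \<sigma>)) / cmeas M K"

text \<open>R^{n+1}_{\<sigma>,i} (argument n).\<close>
definition Rterm :: "('c, 'f, 'd::finite) mesh \<Rightarrow> ('c, 'f, 'd) solution \<Rightarrow> real \<Rightarrow> nat \<Rightarrow> 'f \<Rightarrow> 'd \<Rightarrow> real" where
  "Rterm M S dt n \<sigma> i =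
     1/2 * dual_meas M \<sigma> / dt * rho_dual M S (Suc n) \<sigma> * (vel S (Suc n) \<sigma> $ i - vel S n \<sigma> $ i)^2
     - 1/2 * (\<Sum>(K, \<sigma>')\<in>dual_faces M \<sigma>. dual_flux S n \<sigma> K \<sigma>' * (vel_dual S n K \<sigma> \<sigma>' $ i - vel S n \<sigma> $ i)^2)
     + (vel S (Suc n) \<sigma> $ i - vel S n \<sigma> $ i) *
       (\<Sum>(K, \<sigma>')\<in>dual_faces M \<sigma>. dual_flux S n \<sigma> K \<sigma>' * (vel_dual S n K \<sigma> \<sigma>' $ i - vel S n \<sigma> $ i))"

definition source :: "('c, 'f, 'd::finite) mesh \<Rightarrow> ('c, 'f, 'd) solution \<Rightarrow> real \<Rightarrow> nat \<Rightarrow> 'c \<Rightarrow> real" where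
  "source M S dt n K = (case n of 0 \<Rightarrow> 0
     | Suc m \<Rightarrow> 1/2 * (\<Sum>i\<in>UNIV. \<Sum>\<sigma>\<in>faces_of M K. Rterm M S dt m \<sigma> i))"

definition is_solution :: "('c, 'f, 'd::finite) mesh \<Rightarrow> real \<Rightarrow> real \<Rightarrow> nat \<Rightarrow>
    (real^'d \<Rightarrow> real) \<Rightarrow> (real^'d \<Rightarrow> real) \<Rightarrow> (real^'d \<Rightarrow> real^'d) \<Rightarrow> ('c, 'f, 'd) solution \<Rightarrow> bool" where
  "is_solution M \<gamma> T N rho0 e0 u0 S \<longleftrightarrow>
    (let dt = T / real N in
     \<comment> \<open>(i) initialisation and equation of state\<close>
     (\<forall>K\<in>cells M. rho S 0 K = (LINT x:cell_set M K|lebesgue. rho0 x) / cmeas M K \<and>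
                  ener S 0 K = (LINT x:cell_set M K|lebesgue. e0 x) / cmeas M K) \<and>
     (\<forall>\<sigma>\<in>faces M. vel S 0 \<sigma> = (1 / dual_meas M \<sigma>) *\<^sub>R (LINT x:dual_set M \<sigma>|lebesgue. u0 x)) \<and>
     (\<forall>n\<le>N. \<forall>K\<in>cells M. pres S n K = (\<gamma> - 1) * rho S n K * ener S n K) \<and>
     \<comment> \<open>(ii) face densities / energies, dual fluxes\<close>
     (\<forall>n<N. \<forall>\<sigma>\<in>interior_faces M. \<forall>K\<in>cells_of M \<sigma>. \<forall>L\<in>cells_of M \<sigma>. K \<noteq> L \<longrightarrow>
        convex_comb (rho_face S n \<sigma>) (rho S n K) (rho S n L) \<and>
        convex_comb (ener_face S n \<sigma>) (ener S n K) (ener S n L)) \<and>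
     (\<forall>n<N. \<forall>K \<sigma> \<sigma>'. adj M K \<sigma> \<sigma>' \<longrightarrow> dual_flux S n \<sigma> K \<sigma>' = - dual_flux S n \<sigma>' K \<sigma>) \<and>
     (\<forall>n<N. \<forall>K\<in>cells M. \<forall>\<sigma>\<in>faces_of M K.
        flux M S n K \<sigma> + (\<Sum>\<sigma>'\<in>{\<sigma>'. adj M K \<sigma> \<sigma>'}. dual_flux S n \<sigma> K \<sigma>')
          = (1 / real (zeta M)) * (\<Sum>\<sigma>'\<in>faces_of M K. flux M S n K \<sigma>')) \<and>
     (\<exists>\<xi> :: 'd \<times> bool \<Rightarrow> 'd \<times> bool \<Rightarrow> 'd \<times> bool \<Rightarrow> real.
        \<forall>n<N. \<forall>K \<sigma> \<sigma>''. adj M K \<sigma> \<sigma>'' \<longrightarrow>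
          dual_flux S n \<sigma> K \<sigma>'' =
            (\<Sum>\<sigma>'\<in>faces_of M K. \<xi> (label M K \<sigma>) (label M K \<sigma>'') (label M K \<sigma>') * flux M S n K \<sigma>')) \<and>
     \<comment> \<open>(iii) mass and internal energy balances\<close>
     (\<forall>n<N. \<forall>K\<in>cells M.
        cmeas M K / dt * (rho S (Suc n) K - rho S n K) + (\<Sum>\<sigma>\<in>faces_of M K. flux M S n K \<sigma>) = 0 \<and>
        cmeas M K / dt * (rho S (Suc n) K * ener S (Suc n) K - rho S n K * ener S n K)
          + (\<Sum>\<sigma>\<in>faces_of M K. flux M S n K \<sigma> * ener_face S n \<sigma>)
          + cmeas M K * pres S n K * div_u M S n K = source M S dt n K) \<and>
     \<comment> \<open>(iv) momentum balance\<close>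
     (\<forall>n<N. \<forall>K \<sigma> \<sigma>'. adj M K \<sigma> \<sigma>' \<longrightarrow>
        vel_dual S n K \<sigma> \<sigma>' = vel_dual S n K \<sigma>' \<sigma> \<and>
        (\<forall>i. convex_comb (vel_dual S n K \<sigma> \<sigma>' $ i) (vel S n \<sigma> $ i) (vel S n \<sigma>' $ i))) \<and>
     (\<forall>n<N. \<forall>i. \<forall>\<sigma>\<in>interior_faces M. \<forall>K\<in>cells_of M \<sigma>. \<forall>L\<in>cells_of M \<sigma>. K \<noteq> L \<longrightarrow>
        dual_meas M \<sigma> / dt * (rho_dual M S (Suc n) \<sigma> * (vel S (Suc n) \<sigma> $ i) - rho_dual M S n \<sigma> * (vel S n \<sigma> $ i))
        + (\<Sum>(K', \<sigma>')\<in>dual_faces M \<sigma>. dual_flux S n \<sigma> K' \<sigma>' * (vel_dual S n K' \<sigma> \<sigma>' $ i))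
        + face_meas M \<sigma> * (pres S (Suc n) L - pres S (Suc n) K) * (normal M K \<sigma> $ i) = 0) \<and>
     (\<forall>n\<le>N. \<forall>K\<in>cells M. \<forall>\<sigma>\<in>faces_of M K \<inter> exterior_faces M. vel S n \<sigma> \<bullet> normal M K \<sigma> = 0) \<and>
     (\<forall>n<N. \<forall>i. \<forall>K\<in>cells M. \<forall>\<sigma>\<in>faces_of M K \<inter> exterior_faces M.
        dual_meas M \<sigma> / dt * (rho_dual M S (Suc n) \<sigma> * (vel S (Suc n) \<sigma> $ i) - rho_dual M S n \<sigma> * (vel S n \<sigma> $ i))
        + (\<Sum>(K', \<sigma>')\<in>dual_faces M \<sigma>. dual_flux S n \<sigma> K' \<sigma>' * (vel_dual S n K' \<sigma> \<sigma>' $ i))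
        + bnd_pres S (Suc n) \<sigma> * (normal M K \<sigma> $ i) = 0))"

text \<open>(\<rho> E_k)^n_K, i.e. the defining sum divided by |K|.\<close>
definition kin_energy :: "('c, 'f, 'd::finite) mesh \<Rightarrow> ('c, 'f, 'd) solution \<Rightarrow> nat \<Rightarrow> 'c \<Rightarrow> real" where
  "kin_energy M S n K =
     (1/4 * (\<Sum>\<sigma>\<in>faces_of M K. dual_meas M \<sigma> * rho_dual M S n \<sigma> * sqn (vel S n \<sigma>))) / cmeas M K"

definition Gk :: "('c, 'f, 'd::finite) mesh \<Rightarrow> ('c, 'f, 'd) solution \<Rightarrow> nat \<Rightarrow> 'c \<Rightarrow> 'f \<Rightarrow> real" where
  "Gk M S n K \<sigma> =
     - 1/4 * (\<Sum>(L, \<sigma>')\<in>{(L, \<sigma>') \<in> dual_faces M \<sigma>. L = K}.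
                 dual_flux S n \<sigma> L \<sigma>' * sqn (vel_dual S n L \<sigma> \<sigma>'))
     + 1/4 * (\<Sum>(L, \<sigma>')\<in>{(L, \<sigma>') \<in> dual_faces M \<sigma>. L \<noteq> K}.
                 dual_flux S n \<sigma> L \<sigma>' * sqn (vel_dual S n L \<sigma> \<sigma>'))"

end

theory Submission
  imports Defs
begin

text \<open>Multiplying the momentum balance on the dual cell \<open>D\<^sub>\<sigma>\<close> by \<open>u\<^sup>n\<^sup>+\<^sup>1\<^sub>\<sigma>\<close> and using the mass balance
  on \<open>D\<^sub>\<sigma>\<close> (which follows from the primal mass balance and the consistency condition (b) on the
  dual fluxes) gives a kinetic energy balance on \<open>D\<^sub>\<sigma>\<close> whose residual is exactly \<open>R\<^sup>n\<^sup>+\<^sup>1\<^sub>\<sigma>\<close>.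
  Half of it is attributed to each cell adjacent to \<open>\<sigma>\<close>. Summed over the faces of \<open>K\<close>, the fluxes
  through the dual faces inside \<open>K\<close> cancel by antisymmetry, which leaves \<open>G\<^sub>k\<close>, and the pressure terms
  \<open>|\<sigma>| (p\<^sub>L - p\<^sub>K) u\<^sub>\<sigma>\<cdot>n\<^sub>K\<^sub>,\<^sub>\<sigma>\<close> combine with \<open>|K| p\<^sub>K (div u)\<^sub>K\<close> into the centered pressure flux.
  Adding the internal energy balance at step \<open>n + 1\<close>, whose source \<open>S\<^sup>n\<^sup>+\<^sup>1\<^sub>K\<close> is half the sum of the
  residuals, yields the total energy balance. Only the mesh combinatorics and the equations of the
  scheme enter.\<close>

text \<open>One velocity component of the kinetic energy balance on a dual cell: \<open>c = |D\<^sub>\<sigma>|/\<delta>t\<close>,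
  \<open>r1, r0\<close> are the new and old dual densities, \<open>a, b\<close> the new and old velocity, \<open>f, g\<close> the dual
  fluxes and the velocities on the dual faces, \<open>P\<close> the pressure gradient term. The bracket is the
  residual \<open>R\<^sub>\<sigma>\<^sub>,\<^sub>i\<close>.\<close>

lemma kinetic_energy_identity:
  fixes f g :: "'a \<Rightarrow> real"
  assumes mass: "(\<Sum>x\<in>D. f x) = - c * (r1 - r0)"
    and momentum: "c * (r1 * a - r0 * b) + (\<Sum>x\<in>D. f x * g x) + P = 0"
  shows "1/2 * c * (r1 * a\<^sup>2 - r0 * b\<^sup>2) + 1/2 * (\<Sum>x\<in>D. f x * (g x)\<^sup>2)
    + (1/2 * c * r1 * (a - b)\<^sup>2 - 1/2 * (\<Sum>x\<in>D. f x * (g x - b)\<^sup>2)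
       + (a - b) * (\<Sum>x\<in>D. f x * (g x - b))) + P * a = 0"
proof -
  define X Y where "X = (\<Sum>x\<in>D. f x * g x)" and "Y = (\<Sum>x\<in>D. f x * (g x)\<^sup>2)"
  have square: "(\<Sum>x\<in>D. f x * (g x - b)\<^sup>2) = Y - 2 * b * X + b\<^sup>2 * (\<Sum>x\<in>D. f x)"
  proof -
    have "f x * (g x - b)\<^sup>2 = f x * (g x)\<^sup>2 - 2 * b * (f x * g x) + b\<^sup>2 * f x" for x
      by (simp add: power2_diff algebra_simps)
    then show ?thesis
      unfolding X_def Y_def by (simp add: sum.distrib sum_subtractf sum_distrib_left)
  qed
  have linear: "(\<Sum>x\<in>D. f x * (g x - b)) = X - b * (\<Sum>x\<in>D. f x)"
    unfolding X_def by (simp add: algebra_simps sum_subtractf sum_distrib_left)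
  have P: "P = - c * (r1 * a - r0 * b) - X"
    using momentum unfolding X_def by linarith
  show ?thesis
    unfolding square linear P Y_def[symmetric] mass by (simp add: power2_eq_square algebra_simps)
qed

lemma sum_antisymmetric_eq_0:
  fixes h :: "'a \<times> 'a \<Rightarrow> real"
  assumes swap: "\<And>a b. (a, b) \<in> A \<Longrightarrow> (b, a) \<in> A"
    and antisym: "\<And>a b. (a, b) \<in> A \<Longrightarrow> h (b, a) = - h (a, b)"
  shows "sum h A = 0"
proof -
  have "sum h A = sum (h \<circ> prod.swap) A"
    by (rule sum.reindex_bij_witness[of _ prod.swap prod.swap]) (auto intro: swap)
  also have "\<dots> = sum (\<lambda>p. - h p) A"
  proof (rule sum.cong[OF refl], clarify)
    fix a b
    assume "(a, b) \<in> A"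
    from antisym[OF this] show "(h \<circ> prod.swap) (a, b) = - h (a, b)"
      by simp
  qed
  also have "\<dots> = - sum h A"
    by (simp add: sum_negf)
  finally show ?thesis
    by simp
qed

lemma is_mesh_finite_cells: "is_mesh M \<Longrightarrow> finite (cells M)"
  unfolding is_mesh_def by (elim conjE) assumption

lemma is_mesh_cmeas_pos:
  assumes "is_mesh M" "K \<in> cells M"
  shows "cmeas M K > 0"
proof -
  have "\<forall>K\<in>cells M. compact (cell_set M K) \<and> connected (cell_set M K) \<and> cmeas M K > 0"
    using assms(1) unfolding is_mesh_def by (elim conjE) assumption
  with assms(2) show ?thesis
    by blast
qed

lemma is_mesh_finite_faces_of:
  assumes "is_mesh M" "K \<in> cells M"
  shows "finite (faces_of M K)"
proof -
  have "\<forall>K\<in>cells M. bij_betw (label M K) (faces_of M K) UNIV"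
    using assms(1) unfolding is_mesh_def by (elim conjE) assumption
  with assms(2) have "bij_betw (label M K) (faces_of M K) UNIV"
    by blast
  then show ?thesis
    by (simp add: bij_betw_finite)
qed

lemma is_mesh_card_cells_of_le:
  assumes "is_mesh M" "\<sigma> \<in> faces M"
  shows "card (cells_of M \<sigma>) \<le> 2"
proof -
  have "\<forall>\<sigma>\<in>faces M. face_meas M \<sigma> > 0 \<and> card (cells_of M \<sigma>) \<le> 2"
    using assms(1) unfolding is_mesh_def by (elim conjE) assumption
  with assms(2) show ?thesis
    by blast
qed

lemma is_mesh_normal_opposite:
  assumes "is_mesh M" "K \<in> cells M" "L \<in> cells M" "K \<noteq> L" "\<sigma> \<in> faces_of M K" "\<sigma> \<in> faces_of M L"
  shows "normal M L \<sigma> = - normal M K \<sigma>"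
proof -
  have "\<forall>K\<in>cells M. \<forall>L\<in>cells M. \<forall>\<sigma>. K \<noteq> L \<and> \<sigma> \<in> faces_of M K \<and> \<sigma> \<in> faces_of M L \<longrightarrow>
      normal M L \<sigma> = - normal M K \<sigma>"
    using assms(1) unfolding is_mesh_def by (elim conjE) assumption
  with assms(2-) show ?thesis
    by blast
qed

lemma finite_cells_of: "is_mesh M \<Longrightarrow> finite (cells_of M \<sigma>)"
  by (simp add: cells_of_def is_mesh_finite_cells)

lemma finite_adj:
  assumes "is_mesh M"
  shows "finite {\<sigma>'. adj M K \<sigma> \<sigma>'}"
proof (cases "K \<in> cells M")
  case True
  have "{\<sigma>'. adj M K \<sigma> \<sigma>'} \<subseteq> faces_of M K"
    by (auto simp: adj_def)
  then show ?thesis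
    using is_mesh_finite_faces_of[OF assms True] by (rule finite_subset)
qed (simp add: adj_def)

lemma dual_faces_eq_Sigma: "dual_faces M \<sigma> = Sigma (cells_of M \<sigma>) (\<lambda>K. {\<sigma>'. adj M K \<sigma> \<sigma>'})"
  unfolding dual_faces_def by auto

lemma finite_dual_faces: "is_mesh M \<Longrightarrow> finite (dual_faces M \<sigma>)"
  by (simp add: dual_faces_eq_Sigma finite_cells_of finite_adj)

lemma interior_face_cells_of:
  assumes mesh: "is_mesh M" and K: "K \<in> cells M" "\<sigma> \<in> faces_of M K"
    and interior: "\<sigma> \<in> interior_faces M"
  shows "neighbor M K \<sigma> \<noteq> K" "cells_of M \<sigma> = {K, neighbor M K \<sigma>}"
proof -
  obtain L where L: "L \<in> cells M" "L \<noteq> K" "\<sigma> \<in> faces_of M L"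
    using interior unfolding interior_faces_def by blast
  have \<sigma>: "\<sigma> \<in> faces M"
    using K unfolding faces_def by blast
  have unique: "L' = L" if "L' \<in> cells M" "L' \<noteq> K" "\<sigma> \<in> faces_of M L'" for L'
  proof (rule ccontr)
    assume "L' \<noteq> L"
    then have "card {K, L, L'} = 3"
      using L(2) that(2) by simp
    moreover have "{K, L, L'} \<subseteq> cells_of M \<sigma>"
      using K L that unfolding cells_of_def by blast
    then have "card {K, L, L'} \<le> card (cells_of M \<sigma>)"
      by (rule card_mono[OF finite_cells_of[OF mesh]])
    ultimately show False
      using is_mesh_card_cells_of_le[OF mesh \<sigma>] by linarith
  qed
  have "neighbor M K \<sigma> = L"
    unfolding neighbor_def by (rule the_equality) (use L unique in blast)+
  moreover have "cells_of M \<sigma> = {K, L}"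
    unfolding cells_of_def using K L unique by blast
  ultimately show "neighbor M K \<sigma> \<noteq> K" "cells_of M \<sigma> = {K, neighbor M K \<sigma>}"
    using L(2) by simp_all
qed

lemma sum_flux_cells_of:
  assumes mesh: "is_mesh M"
  shows "(\<Sum>K\<in>cells_of M \<sigma>. flux M S n K \<sigma>) = 0"
proof (cases "\<sigma> \<in> interior_faces M")
  case True
  then obtain K where K: "K \<in> cells M" "\<sigma> \<in> faces_of M K"
    unfolding interior_faces_def by blast
  define L where "L = neighbor M K \<sigma>"
  have "L \<noteq> K" "cells_of M \<sigma> = {K, L}"
    using interior_face_cells_of[OF mesh K True] unfolding L_def by simp_all
  moreover from this have "L \<in> cells M" "\<sigma> \<in> faces_of M L"
    unfolding cells_of_def by blast+
  moreover from calculation have "normal M L \<sigma> = - normal M K \<sigma>"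
    using is_mesh_normal_opposite[OF mesh K(1) _ _ K(2)] by metis
  ultimately show ?thesis
    using True by (simp add: flux_def inner_minus_right)
qed (simp add: flux_def)

lemma solution_mass_balance:
  assumes "is_solution M \<gamma> T N rho0 e0 u0 S" "n < N" "K \<in> cells M"
  shows "cmeas M K / (T / real N) * (rho S (Suc n) K - rho S n K)
      + (\<Sum>\<sigma>\<in>faces_of M K. flux M S n K \<sigma>) = 0"
  using assms unfolding is_solution_def Let_def by (elim conjE) simp

lemma solution_internal_energy_balance:
  assumes "is_solution M \<gamma> T N rho0 e0 u0 S" "n < N" "K \<in> cells M"
  shows "cmeas M K / (T / real N) * (rho S (Suc n) K * ener S (Suc n) K - rho S n K * ener S n K)
      + (\<Sum>\<sigma>\<in>faces_of M K. flux M S n K \<sigma> * ener_face S n \<sigma>)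
      + cmeas M K * pres S n K * div_u M S n K = source M S (T / real N) n K"
  using assms unfolding is_solution_def Let_def by (elim conjE) simp

lemma solution_dual_flux_consistency:
  assumes "is_solution M \<gamma> T N rho0 e0 u0 S" "n < N" "K \<in> cells M" "\<sigma> \<in> faces_of M K"
  shows "flux M S n K \<sigma> + (\<Sum>\<sigma>'\<in>{\<sigma>'. adj M K \<sigma> \<sigma>'}. dual_flux S n \<sigma> K \<sigma>')
      = 1 / real (zeta M) * (\<Sum>\<sigma>'\<in>faces_of M K. flux M S n K \<sigma>')"
  using assms unfolding is_solution_def Let_def by (elim conjE) simp

lemma solution_dual_flux_antisym:
  assumes "is_solution M \<gamma> T N rho0 e0 u0 S" "n < N" "adj M K \<sigma> \<sigma>'"
  shows "dual_flux S n \<sigma> K \<sigma>' = - dual_flux S n \<sigma>' K \<sigma>"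
proof -
  have "\<forall>n<N. \<forall>K \<sigma> \<sigma>'. adj M K \<sigma> \<sigma>' \<longrightarrow> dual_flux S n \<sigma> K \<sigma>' = - dual_flux S n \<sigma>' K \<sigma>"
    using assms(1) unfolding is_solution_def Let_def by (elim conjE) assumption
  with assms(2,3) show ?thesis by blast
qed

lemma solution_vel_dual_sym:
  assumes "is_solution M \<gamma> T N rho0 e0 u0 S" "n < N" "adj M K \<sigma> \<sigma>'"
  shows "vel_dual S n K \<sigma> \<sigma>' = vel_dual S n K \<sigma>' \<sigma>"
  using assms unfolding is_solution_def Let_def by (elim conjE) fast

lemma solution_momentum_interior:
  assumes "is_solution M \<gamma> T N rho0 e0 u0 S" "n < N" "\<sigma> \<in> interior_faces M"
    "K \<in> cells_of M \<sigma>" "L \<in> cells_of M \<sigma>" "K \<noteq> L"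
  shows "dual_meas M \<sigma> / (T / real N) * (rho_dual M S (Suc n) \<sigma> * (vel S (Suc n) \<sigma> $ i)
        - rho_dual M S n \<sigma> * (vel S n \<sigma> $ i))
      + (\<Sum>(K', \<sigma>')\<in>dual_faces M \<sigma>. dual_flux S n \<sigma> K' \<sigma>' * (vel_dual S n K' \<sigma> \<sigma>' $ i))
      + face_meas M \<sigma> * (pres S (Suc n) L - pres S (Suc n) K) * (normal M K \<sigma> $ i) = 0"
  using assms unfolding is_solution_def Let_def by (elim conjE) simp

lemma solution_momentum_boundary:
  assumes "is_solution M \<gamma> T N rho0 e0 u0 S" "n < N" "K \<in> cells M"
    "\<sigma> \<in> faces_of M K \<inter> exterior_faces M"
  shows "dual_meas M \<sigma> / (T / real N) * (rho_dual M S (Suc n) \<sigma> * (vel S (Suc n) \<sigma> $ i)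
        - rho_dual M S n \<sigma> * (vel S n \<sigma> $ i))
      + (\<Sum>(K', \<sigma>')\<in>dual_faces M \<sigma>. dual_flux S n \<sigma> K' \<sigma>' * (vel_dual S n K' \<sigma> \<sigma>' $ i))
      + bnd_pres S (Suc n) \<sigma> * (normal M K \<sigma> $ i) = 0"
  using assms unfolding is_solution_def Let_def by (elim conjE) simp

lemma solution_boundary_normal_velocity:
  assumes "is_solution M \<gamma> T N rho0 e0 u0 S" "n \<le> N" "K \<in> cells M"
    "\<sigma> \<in> faces_of M K \<inter> exterior_faces M"
  shows "vel S n \<sigma> \<bullet> normal M K \<sigma> = 0"
  using assms unfolding is_solution_def Let_def by (elim conjE) simp

definition dual_kinetic_change ::
    "('c, 'f, 'd::finite) mesh \<Rightarrow> ('c, 'f, 'd) solution \<Rightarrow> real \<Rightarrow> nat \<Rightarrow> 'f \<Rightarrow> real" where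
  "dual_kinetic_change M S dt n \<sigma> = 1/2 * (dual_meas M \<sigma> / dt) *
     (rho_dual M S (Suc n) \<sigma> * sqn (vel S (Suc n) \<sigma>) - rho_dual M S n \<sigma> * sqn (vel S n \<sigma>))"

definition dual_kinetic_flux ::
    "('c, 'f, 'd::finite) mesh \<Rightarrow> ('c, 'f, 'd) solution \<Rightarrow> nat \<Rightarrow> 'f \<Rightarrow> real" where
  "dual_kinetic_flux M S n \<sigma> =
     1/2 * (\<Sum>(L, \<sigma>')\<in>dual_faces M \<sigma>. dual_flux S n \<sigma> L \<sigma>' * sqn (vel_dual S n L \<sigma> \<sigma>'))"

definition dual_remainder ::
    "('c, 'f, 'd::finite) mesh \<Rightarrow> ('c, 'f, 'd) solution \<Rightarrow> real \<Rightarrow> nat \<Rightarrow> 'f \<Rightarrow> real" where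
  "dual_remainder M S dt n \<sigma> = (\<Sum>i\<in>UNIV. Rterm M S dt n \<sigma> i)"

definition pressure_jump_work ::
    "('c, 'f, 'd::finite) mesh \<Rightarrow> ('c, 'f, 'd) solution \<Rightarrow> nat \<Rightarrow> 'c \<Rightarrow> 'f \<Rightarrow> real" where
  "pressure_jump_work M S n K \<sigma> = (if \<sigma> \<in> interior_faces M
     then face_meas M \<sigma> * (pres S n (neighbor M K \<sigma>) - pres S n K) * (vel S n \<sigma> \<bullet> normal M K \<sigma>)
     else 0)"

lemma dual_meas_pos:
  assumes "is_mesh M" "\<sigma> \<in> faces M"
  shows "dual_meas M \<sigma> > 0"
proof -
  have "cells_of M \<sigma> \<noteq> {}"
    using assms(2) unfolding faces_def cells_of_def by auto
  then show ?thesis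
    unfolding dual_meas_def hd_meas_def zeta_def
    using assms(1) by (intro sum_pos finite_cells_of) (auto simp: cells_of_def is_mesh_cmeas_pos)
qed

lemma dual_mass_balance:
  assumes mesh: "is_mesh M" and \<sigma>: "\<sigma> \<in> faces M"
    and mass: "\<And>K. K \<in> cells M \<Longrightarrow> cmeas M K / dt * (rho S (Suc n) K - rho S n K)
        + (\<Sum>\<sigma>\<in>faces_of M K. flux M S n K \<sigma>) = 0"
    and consistency: "\<And>K. K \<in> cells M \<Longrightarrow> \<sigma> \<in> faces_of M K \<Longrightarrow>
        flux M S n K \<sigma> + (\<Sum>\<sigma>'\<in>{\<sigma>'. adj M K \<sigma> \<sigma>'}. dual_flux S n \<sigma> K \<sigma>')
          = 1 / real (zeta M) * (\<Sum>\<sigma>'\<in>faces_of M K. flux M S n K \<sigma>')"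
  shows "(\<Sum>(L, \<sigma>')\<in>dual_faces M \<sigma>. dual_flux S n \<sigma> L \<sigma>')
      = - (dual_meas M \<sigma> / dt) * (rho_dual M S (Suc n) \<sigma> - rho_dual M S n \<sigma>)"
proof -
  have half_diamond_mass: "flux M S n K \<sigma> + (\<Sum>\<sigma>'\<in>{\<sigma>'. adj M K \<sigma> \<sigma>'}. dual_flux S n \<sigma> K \<sigma>')
      = - (hd_meas M K \<sigma> / dt) * (rho S (Suc n) K - rho S n K)" if "K \<in> cells_of M \<sigma>" for K
  proof -
    have K: "K \<in> cells M" "\<sigma> \<in> faces_of M K"
      using that unfolding cells_of_def by simp_all
    have "(\<Sum>\<sigma>\<in>faces_of M K. flux M S n K \<sigma>) = - (cmeas M K / dt) * (rho S (Suc n) K - rho S n K)"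
      using mass[OF K(1)] by linarith
    then show ?thesis
      unfolding consistency[OF K] hd_meas_def by simp
  qed
  have "(\<Sum>(L, \<sigma>')\<in>dual_faces M \<sigma>. dual_flux S n \<sigma> L \<sigma>')
      = (\<Sum>K\<in>cells_of M \<sigma>. \<Sum>\<sigma>'\<in>{\<sigma>'. adj M K \<sigma> \<sigma>'}. dual_flux S n \<sigma> K \<sigma>')"
    unfolding dual_faces_eq_Sigma
    by (rule sum.Sigma[symmetric]) (simp_all add: finite_cells_of finite_adj mesh)
  also have "\<dots> = (\<Sum>K\<in>cells_of M \<sigma>. flux M S n K \<sigma> + (\<Sum>\<sigma>'\<in>{\<sigma>'. adj M K \<sigma> \<sigma>'}. dual_flux S n \<sigma> K \<sigma>'))"
    by (simp add: sum.distrib sum_flux_cells_of[OF mesh])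
  also have "\<dots> = - (\<Sum>K\<in>cells_of M \<sigma>. hd_meas M K \<sigma> * (rho S (Suc n) K - rho S n K)) / dt"
    by (simp add: half_diamond_mass sum_negf sum_divide_distrib)
  also have "\<dots> = - (dual_meas M \<sigma> / dt) * (rho_dual M S (Suc n) \<sigma> - rho_dual M S n \<sigma>)"
  proof -
    have dual_mass: "dual_meas M \<sigma> * (rho_dual M S (Suc n) \<sigma> - rho_dual M S n \<sigma>)
        = (\<Sum>K\<in>cells_of M \<sigma>. hd_meas M K \<sigma> * (rho S (Suc n) K - rho S n K))"
      using dual_meas_pos[OF mesh \<sigma>] by (simp add: rho_dual_def right_diff_distrib sum_subtractf)
    then show ?thesis
      by (simp flip: dual_mass)
  qed
  finally show ?thesis .
qed

lemma dual_kinetic_energy_balance: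
  assumes mass: "(\<Sum>(L, \<sigma>')\<in>dual_faces M \<sigma>. dual_flux S n \<sigma> L \<sigma>')
      = - (dual_meas M \<sigma> / dt) * (rho_dual M S (Suc n) \<sigma> - rho_dual M S n \<sigma>)"
    and momentum: "\<And>i. dual_meas M \<sigma> / dt * (rho_dual M S (Suc n) \<sigma> * (vel S (Suc n) \<sigma> $ i)
        - rho_dual M S n \<sigma> * (vel S n \<sigma> $ i))
      + (\<Sum>(L, \<sigma>')\<in>dual_faces M \<sigma>. dual_flux S n \<sigma> L \<sigma>' * (vel_dual S n L \<sigma> \<sigma>' $ i))
      + q * (nv $ i) = 0"
  shows "dual_kinetic_change M S dt n \<sigma> + dual_kinetic_flux M S n \<sigma> + dual_remainder M S dt n \<sigma>
      + q * (vel S (Suc n) \<sigma> \<bullet> nv) = 0"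
proof -
  have component: "1/2 * (dual_meas M \<sigma> / dt) * (rho_dual M S (Suc n) \<sigma> * (vel S (Suc n) \<sigma> $ i)\<^sup>2
        - rho_dual M S n \<sigma> * (vel S n \<sigma> $ i)\<^sup>2)
      + 1/2 * (\<Sum>(L, \<sigma>')\<in>dual_faces M \<sigma>. dual_flux S n \<sigma> L \<sigma>' * (vel_dual S n L \<sigma> \<sigma>' $ i)\<^sup>2)
      + Rterm M S dt n \<sigma> i + q * (nv $ i) * (vel S (Suc n) \<sigma> $ i) = 0" for i
    using kinetic_energy_identity[where f = "\<lambda>p. dual_flux S n \<sigma> (fst p) (snd p)"
        and g = "\<lambda>p. vel_dual S n (fst p) \<sigma> (snd p) $ i",
        OF mass[unfolded case_prod_unfold] momentum[of i, unfolded case_prod_unfold]]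
    unfolding Rterm_def case_prod_unfold by simp
  have change: "(\<Sum>i\<in>UNIV. 1/2 * (dual_meas M \<sigma> / dt) * (rho_dual M S (Suc n) \<sigma> * (vel S (Suc n) \<sigma> $ i)\<^sup>2
        - rho_dual M S n \<sigma> * (vel S n \<sigma> $ i)\<^sup>2)) = dual_kinetic_change M S dt n \<sigma>"
    unfolding dual_kinetic_change_def sqn_def
    by (simp only: sum_distrib_left[symmetric] sum_subtractf)
  have flux: "(\<Sum>i\<in>UNIV. 1/2 * (\<Sum>(L, \<sigma>')\<in>dual_faces M \<sigma>. dual_flux S n \<sigma> L \<sigma>' * (vel_dual S n L \<sigma> \<sigma>' $ i)\<^sup>2))
      = dual_kinetic_flux M S n \<sigma>"
    unfolding dual_kinetic_flux_def sqn_def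
    by (simp add: sum_distrib_left case_prod_unfold sum.swap[of _ UNIV])
  have pressure: "(\<Sum>i\<in>UNIV. q * (nv $ i) * (vel S (Suc n) \<sigma> $ i)) = q * (vel S (Suc n) \<sigma> \<bullet> nv)"
    unfolding inner_vec_def by (simp add: sum_distrib_left mult_ac)
  show ?thesis
    unfolding dual_remainder_def change[symmetric] flux[symmetric] pressure[symmetric]
    by (simp only: sum.distrib[symmetric] component sum.neutral_const)
qed

lemma face_kinetic_energy_balance:
  assumes mesh: "is_mesh M" and sol: "is_solution M \<gamma> T N rho0 e0 u0 S" and n: "n < N"
    and K: "K \<in> cells M" "\<sigma> \<in> faces_of M K"
  shows "dual_kinetic_change M S (T / real N) n \<sigma> + dual_kinetic_flux M S n \<sigma>
      + dual_remainder M S (T / real N) n \<sigma> + pressure_jump_work M S (Suc n) K \<sigma> = 0"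
proof -
  have \<sigma>: "\<sigma> \<in> faces M"
    using K unfolding faces_def by blast
  note mass = dual_mass_balance[OF mesh \<sigma> solution_mass_balance[OF sol n]
      solution_dual_flux_consistency[OF sol n]]
  show ?thesis
  proof (cases "\<sigma> \<in> interior_faces M")
    case True
    define L where "L = neighbor M K \<sigma>"
    have "K \<in> cells_of M \<sigma>" "L \<in> cells_of M \<sigma>" "K \<noteq> L"
      using interior_face_cells_of[OF mesh K True] unfolding L_def by auto
    from dual_kinetic_energy_balance[OF mass solution_momentum_interior[OF sol n True this]]
    show ?thesis
      unfolding pressure_jump_work_def L_def using True by simp
  next
    case False
    then have boundary: "\<sigma> \<in> faces_of M K \<inter> exterior_faces M"
      using K(2) \<sigma> unfolding exterior_faces_def by blast
    from dual_kinetic_energy_balance[OF mass solution_momentum_boundary[OF sol n K(1) boundary]]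
    show ?thesis
      unfolding pressure_jump_work_def
      using False solution_boundary_normal_velocity[OF sol _ K(1) boundary] n by simp
  qed
qed

lemma Gk_eq:
  assumes mesh: "is_mesh M" and K: "K \<in> cells M" "\<sigma> \<in> faces_of M K"
  shows "Gk M S n K \<sigma> = 1/2 * dual_kinetic_flux M S n \<sigma>
      - 1/2 * (\<Sum>\<sigma>'\<in>{\<sigma>'. adj M K \<sigma> \<sigma>'}. dual_flux S n \<sigma> K \<sigma>' * sqn (vel_dual S n K \<sigma> \<sigma>'))"
proof -
  define h where "h = (\<lambda>(L, \<sigma>'). dual_flux S n \<sigma> L \<sigma>' * sqn (vel_dual S n L \<sigma> \<sigma>'))"
  define inside where "inside = {(L, \<sigma>') \<in> dual_faces M \<sigma>. L = K}"
  define outside where "outside = {(L, \<sigma>') \<in> dual_faces M \<sigma>. L \<noteq> K}"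
  have "sum h (dual_faces M \<sigma>) = sum h inside + sum h outside"
  proof -
    have "dual_faces M \<sigma> = inside \<union> outside"
      unfolding inside_def outside_def by auto
    moreover have "finite inside" "finite outside"
      unfolding inside_def outside_def by (auto intro: rev_finite_subset[OF finite_dual_faces[OF mesh]])
    moreover have "inside \<inter> outside = {}"
      unfolding inside_def outside_def by auto
    ultimately show ?thesis
      by (simp add: sum.union_disjoint)
  qed
  moreover have "inside = Pair K ` {\<sigma>'. adj M K \<sigma> \<sigma>'}"
    unfolding inside_def dual_faces_def using K by (auto simp: cells_of_def)
  then have "sum h inside = (\<Sum>\<sigma>'\<in>{\<sigma>'. adj M K \<sigma> \<sigma>'}. dual_flux S n \<sigma> K \<sigma>' * sqn (vel_dual S n K \<sigma> \<sigma>'))"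
    by (simp add: sum.reindex inj_on_def h_def)
  ultimately show ?thesis
    unfolding Gk_def dual_kinetic_flux_def inside_def outside_def h_def by (simp add: field_simps)
qed

lemma sum_Gk:
  assumes mesh: "is_mesh M" and K: "K \<in> cells M"
    and antisym: "\<And>\<sigma> \<sigma>'. adj M K \<sigma> \<sigma>' \<Longrightarrow> dual_flux S n \<sigma> K \<sigma>' = - dual_flux S n \<sigma>' K \<sigma>"
    and sym: "\<And>\<sigma> \<sigma>'. adj M K \<sigma> \<sigma>' \<Longrightarrow> vel_dual S n K \<sigma> \<sigma>' = vel_dual S n K \<sigma>' \<sigma>"
  shows "(\<Sum>\<sigma>\<in>faces_of M K. Gk M S n K \<sigma>) = 1/2 * (\<Sum>\<sigma>\<in>faces_of M K. dual_kinetic_flux M S n \<sigma>)"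
proof -
  have "(\<Sum>\<sigma>\<in>faces_of M K. \<Sum>\<sigma>'\<in>{\<sigma>'. adj M K \<sigma> \<sigma>'}. dual_flux S n \<sigma> K \<sigma>' * sqn (vel_dual S n K \<sigma> \<sigma>'))
      = (\<Sum>(\<sigma>, \<sigma>')\<in>Sigma (faces_of M K) (\<lambda>\<sigma>. {\<sigma>'. adj M K \<sigma> \<sigma>'}).
          dual_flux S n \<sigma> K \<sigma>' * sqn (vel_dual S n K \<sigma> \<sigma>'))"
    by (rule sum.Sigma) (simp_all add: is_mesh_finite_faces_of[OF mesh K] finite_adj[OF mesh])
  also have "\<dots> = 0"
  proof (rule sum_antisymmetric_eq_0)
    fix \<sigma> \<sigma>'
    assume "(\<sigma>, \<sigma>') \<in> Sigma (faces_of M K) (\<lambda>\<sigma>. {\<sigma>'. adj M K \<sigma> \<sigma>'})"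
    then have adj: "adj M K \<sigma> \<sigma>'"
      by simp
    then show "(\<sigma>', \<sigma>) \<in> Sigma (faces_of M K) (\<lambda>\<sigma>. {\<sigma>'. adj M K \<sigma> \<sigma>'})"
      by (auto simp: adj_def)
    show "(case (\<sigma>', \<sigma>) of (\<sigma>, \<sigma>') \<Rightarrow> dual_flux S n \<sigma> K \<sigma>' * sqn (vel_dual S n K \<sigma> \<sigma>'))
        = - (case (\<sigma>, \<sigma>') of (\<sigma>, \<sigma>') \<Rightarrow> dual_flux S n \<sigma> K \<sigma>' * sqn (vel_dual S n K \<sigma> \<sigma>'))"
      using antisym[OF adj] sym[OF adj] by simp
  qed
  finally have inner_cancel: "(\<Sum>\<sigma>\<in>faces_of M K. \<Sum>\<sigma>'\<in>{\<sigma>'. adj M K \<sigma> \<sigma>'}.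
      dual_flux S n \<sigma> K \<sigma>' * sqn (vel_dual S n K \<sigma> \<sigma>')) = 0" .
  have "(\<Sum>\<sigma>\<in>faces_of M K. Gk M S n K \<sigma>) = (\<Sum>\<sigma>\<in>faces_of M K. 1/2 * dual_kinetic_flux M S n \<sigma>
      - 1/2 * (\<Sum>\<sigma>'\<in>{\<sigma>'. adj M K \<sigma> \<sigma>'}. dual_flux S n \<sigma> K \<sigma>' * sqn (vel_dual S n K \<sigma> \<sigma>')))"
    by (rule sum.cong[OF refl]) (rule Gk_eq[OF mesh K])
  also have "\<dots> = 1/2 * (\<Sum>\<sigma>\<in>faces_of M K. dual_kinetic_flux M S n \<sigma>)"
    by (simp only: sum_subtractf inner_cancel flip: sum_distrib_left)
  finally show ?thesis .
qed

lemma kin_energy_change: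
  assumes "cmeas M K \<noteq> 0"
  shows "cmeas M K / dt * (kin_energy M S (Suc n) K - kin_energy M S n K)
      = 1/2 * (\<Sum>\<sigma>\<in>faces_of M K. dual_kinetic_change M S dt n \<sigma>)"
proof -
  have change: "dual_kinetic_change M S dt n \<sigma>
      = (dual_meas M \<sigma> * rho_dual M S (Suc n) \<sigma> * sqn (vel S (Suc n) \<sigma>)
          - dual_meas M \<sigma> * rho_dual M S n \<sigma> * sqn (vel S n \<sigma>)) / (2 * dt)" for \<sigma>
    unfolding dual_kinetic_change_def by (simp add: right_diff_distrib diff_divide_distrib mult.assoc)
  show ?thesis
    using assms unfolding kin_energy_def change
    by (cases "dt = 0") (simp_all add: sum_divide_distrib[symmetric] sum_subtractf field_simps)
qed

lemma source_Suc:
  "source M S dt (Suc n) K = 1/2 * (\<Sum>\<sigma>\<in>faces_of M K. dual_remainder M S dt n \<sigma>)"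
  unfolding source_def dual_remainder_def by (simp add: sum.swap[of _ UNIV])

lemma sum_centered_pressure_flux:
  assumes "finite (faces_of M K)" "cmeas M K \<noteq> 0"
    and boundary: "\<And>\<sigma>. \<sigma> \<in> faces_of M K \<Longrightarrow> \<sigma> \<notin> interior_faces M \<Longrightarrow> vel S n \<sigma> \<bullet> normal M K \<sigma> = 0"
  shows "(\<Sum>\<sigma>\<in>faces_of M K \<inter> interior_faces M.
        face_meas M \<sigma> * ((pres S n K + pres S n (neighbor M K \<sigma>)) / 2) * (vel S n \<sigma> \<bullet> normal M K \<sigma>))
      = cmeas M K * pres S n K * div_u M S n K + 1/2 * (\<Sum>\<sigma>\<in>faces_of M K. pressure_jump_work M S n K \<sigma>)"
proof -
  have div_u: "cmeas M K * pres S n K * div_u M S n K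
      = (\<Sum>\<sigma>\<in>faces_of M K. face_meas M \<sigma> * pres S n K * (vel S n \<sigma> \<bullet> normal M K \<sigma>))"
  proof -
    have "cmeas M K * pres S n K * div_u M S n K
        = pres S n K * (\<Sum>\<sigma>\<in>faces_of M K. face_meas M \<sigma> * (vel S n \<sigma> \<bullet> normal M K \<sigma>))"
      using assms(2) unfolding div_u_def by simp
    then show ?thesis
      by (simp add: sum_distrib_left mult_ac)
  qed
  have "(\<Sum>\<sigma>\<in>faces_of M K \<inter> interior_faces M.
        face_meas M \<sigma> * ((pres S n K + pres S n (neighbor M K \<sigma>)) / 2) * (vel S n \<sigma> \<bullet> normal M K \<sigma>))
      = (\<Sum>\<sigma>\<in>faces_of M K. face_meas M \<sigma> * pres S n K * (vel S n \<sigma> \<bullet> normal M K \<sigma>)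
          + 1/2 * pressure_jump_work M S n K \<sigma>)"
    unfolding sum.inter_restrict[OF assms(1)] pressure_jump_work_def
    by (rule sum.cong) (auto simp: boundary field_simps)
  also have "\<dots> = cmeas M K * pres S n K * div_u M S n K
      + 1/2 * (\<Sum>\<sigma>\<in>faces_of M K. pressure_jump_work M S n K \<sigma>)"
    unfolding div_u by (simp add: sum.distrib sum_distrib_left)
  finally show ?thesis .
qed

lemma cell_kinetic_energy_balance:
  assumes mesh: "is_mesh M" and sol: "is_solution M \<gamma> T N rho0 e0 u0 S" and n: "n < N"
    and K: "K \<in> cells M"
  shows "cmeas M K / (T / real N) * (kin_energy M S (Suc n) K - kin_energy M S n K)
      + (\<Sum>\<sigma>\<in>faces_of M K. Gk M S n K \<sigma>)
      + (\<Sum>\<sigma>\<in>faces_of M K \<inter> interior_faces M.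
          face_meas M \<sigma> * ((pres S (Suc n) K + pres S (Suc n) (neighbor M K \<sigma>)) / 2)
            * (vel S (Suc n) \<sigma> \<bullet> normal M K \<sigma>))
    = cmeas M K * pres S (Suc n) K * div_u M S (Suc n) K
      - 1/2 * (\<Sum>\<sigma>\<in>faces_of M K. dual_remainder M S (T / real N) n \<sigma>)"
proof -
  define dt where "dt = T / real N"
  have cmeas: "cmeas M K \<noteq> 0"
    using is_mesh_cmeas_pos[OF mesh K] by simp
  have boundary: "vel S (Suc n) \<sigma> \<bullet> normal M K \<sigma> = 0"
    if "\<sigma> \<in> faces_of M K" "\<sigma> \<notin> interior_faces M" for \<sigma>
    using solution_boundary_normal_velocity[OF sol Suc_leI[OF n] K] K that
    unfolding exterior_faces_def faces_def by blast
  have "(\<Sum>\<sigma>\<in>faces_of M K. dual_kinetic_change M S dt n \<sigma>) + (\<Sum>\<sigma>\<in>faces_of M K. dual_kinetic_flux M S n \<sigma>)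
      + (\<Sum>\<sigma>\<in>faces_of M K. dual_remainder M S dt n \<sigma>)
      + (\<Sum>\<sigma>\<in>faces_of M K. pressure_jump_work M S (Suc n) K \<sigma>) = 0"
    using face_kinetic_energy_balance[OF mesh sol n K] unfolding dt_def by (simp flip: sum.distrib)
  moreover note kin_energy_change[OF cmeas, of dt S n]
  moreover have "(\<Sum>\<sigma>\<in>faces_of M K. Gk M S n K \<sigma>) = 1/2 * (\<Sum>\<sigma>\<in>faces_of M K. dual_kinetic_flux M S n \<sigma>)"
    using n by (intro sum_Gk[OF mesh K] solution_dual_flux_antisym[OF sol] solution_vel_dual_sym[OF sol])
  moreover have "(\<Sum>\<sigma>\<in>faces_of M K \<inter> interior_faces M.
        face_meas M \<sigma> * ((pres S (Suc n) K + pres S (Suc n) (neighbor M K \<sigma>)) / 2)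
          * (vel S (Suc n) \<sigma> \<bullet> normal M K \<sigma>))
      = cmeas M K * pres S (Suc n) K * div_u M S (Suc n) K
        + 1/2 * (\<Sum>\<sigma>\<in>faces_of M K. pressure_jump_work M S (Suc n) K \<sigma>)"
    by (intro sum_centered_pressure_flux[OF is_mesh_finite_faces_of[OF mesh K] cmeas] boundary)
  ultimately show ?thesis
    unfolding dt_def[symmetric] by linarith
qed

theorem mainTheorem4:
  fixes M :: "('c, 'f, 'd::finite) mesh"
    and S :: "('c, 'f, 'd) solution"
    and \<gamma> T :: real and N :: nat
    and rho0 e0 :: "real^'d \<Rightarrow> real" and u0 :: "real^'d \<Rightarrow> real^'d"
  assumes mesh: "is_mesh M"
    and N: "N \<ge> 2" and T: "T > 0" and gamma: "\<gamma> > 1"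
    and rho0: "rho0 \<in> borel_measurable lebesgue" "\<exists>B. \<forall>x\<in>omega M. \<bar>rho0 x\<bar> \<le> B"
              "\<forall>x\<in>omega M. rho0 x > 0"
    and e0: "e0 \<in> borel_measurable lebesgue" "\<exists>B. \<forall>x\<in>omega M. \<bar>e0 x\<bar> \<le> B"
            "\<forall>x\<in>omega M. e0 x > 0"
    and u0: "u0 \<in> borel_measurable lebesgue" "\<exists>B. \<forall>x\<in>omega M. norm (u0 x) \<le> B"
    and sol: "is_solution M \<gamma> T N rho0 e0 u0 S"
  shows "\<forall>n. n \<le> N - 2 \<longrightarrow> (\<forall>K\<in>cells M.
     cmeas M K / (T / real N) *
        ((rho S (n+2) K * ener S (n+2) K + kin_energy M S (n+1) K)
         - (rho S (n+1) K * ener S (n+1) K + kin_energy M S n K))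
     + (\<Sum>\<sigma>\<in>faces_of M K. flux M S (n+1) K \<sigma> * ener_face S (n+1) \<sigma> + Gk M S n K \<sigma>)
     + (\<Sum>\<sigma>\<in>faces_of M K \<inter> interior_faces M.
          face_meas M \<sigma> * ((pres S (n+1) K + pres S (n+1) (neighbor M K \<sigma>)) / 2)
            * (vel S (n+1) \<sigma> \<bullet> normal M K \<sigma>))
     = 0)"
proof (intro allI impI ballI)
  fix n K
  assume "n \<le> N - 2" and K: "K \<in> cells M"
  then have n: "Suc n < N"
    using N by linarith
  have split: "c * ((a + b) - (a' + b')) = c * (a - a') + c * (b - b')" for c a b a' b' :: real
    by (simp add: algebra_simps)
  show "cmeas M K / (T / real N) *
        ((rho S (n+2) K * ener S (n+2) K + kin_energy M S (n+1) K)
         - (rho S (n+1) K * ener S (n+1) K + kin_energy M S n K))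
     + (\<Sum>\<sigma>\<in>faces_of M K. flux M S (n+1) K \<sigma> * ener_face S (n+1) \<sigma> + Gk M S n K \<sigma>)
     + (\<Sum>\<sigma>\<in>faces_of M K \<inter> interior_faces M.
          face_meas M \<sigma> * ((pres S (n+1) K + pres S (n+1) (neighbor M K \<sigma>)) / 2)
            * (vel S (n+1) \<sigma> \<bullet> normal M K \<sigma>))
     = 0"
    using solution_internal_energy_balance[OF sol n K] cell_kinetic_energy_balance[OF mesh sol Suc_lessD[OF n] K]
    unfolding split source_Suc add_2_eq_Suc' Suc_eq_plus1[symmetric] sum.distrib by linarith
qed

end
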